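(* Consider the causal adversarial multi-path network model described in the context, with links of unequal capacities $u_1,\dots,u_C$, overwrite jamming, no feedback and no secrecy requirement. For any $\vec z=(z_{rw},z_{ro},z_{wo})$ with $z_{rw}+z_{ro}+z_{wo}\le C$, the capacity is $$R^{ow}_j(\hat C,\vec z)=\begin{cases} \hat C-(U_{z_{rw}+z_{wo}})_{\max} & \text{if } 2z_{wo}+2z_{rw}<C,\\ 0 & \text{otherwise.}\end{cases}$$
   Context: Model. A sender (Alice) communicates with a receiver (Bob) over $C$ parallel directed noiseless links $L_1,\dots,L_C$, where link $L_i$ has capacity $u_i$ (it carries $u_i$ units of information per time slot; large-alphabet regime), and $\hat C=\sum_{i=1}^C u_i$. For an integer $w$, $(U_w)_{\max}$ denotes the maximum, over all sets of $w$ links, of the sum of their capacities. A code of block length $n$ and rate $R$ has message $M$ uniform on $\{0,1\}^{nR}$; the encoder is stochastic, using private randomness unknown to the adversary, and maps message and randomness to codewords $\vec X_i$ sent on $L_i$; the decoder maps the received words $\vec Y_1,\dots,\vec Y_C$ to $\hat M$. Adversary. Calvin, who knows the encoder and decoder, selects pairwise disjoint link sets $Z_{rw},Z_{ro},Z_{wo}$ (unknown to Alice and Bob) with $|Z_{rw}|\le z_{rw}$, $|Z_{ro}|\le z_{ro}$, $|Z_{wo}|\le z_{wo}$; he reads the links in $Z_r=Z_{rw}\cup Z_{ro}$ and jams the links in $Z_w=Z_{rw}\cup Z_{wo}$. He is causal: his jamming of the $t$-th symbols may depend only on the first $t$ symbols observed on $Z_r$. Under additive jamming $\vec Y_i=\vec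 X_i+\vec E_i$ with $\vec E_i$ chosen by Calvin and $\vec E_i=0$ for $i\notin Z_w$; under overwrite jamming $\vec Y_i=\vec E_i$ for $i\in Z_w$ and $\vec Y_i=\vec X_i$ otherwise. Rate $R$ is achievable if for every $\varepsilon>0$ and all sufficiently large $n$ there is a code with $\Pr[\hat M\ne M]<\varepsilon$ against every admissible causal adversary; the capacity is the supremum of achievable rates. No feedback: the encoder's output depends only on the message and Alice's randomness. *)

theory Defs
  imports "HOL-Probability.Probability"
begin

text \<open>
  In the large-alphabet regime a link of capacity u i
  carries one symbol from an alphabet of size q ^ u i per time slot (i.e. u i
  units of information, one unit = log q).  A word transmitted over the whole
  network during n slots is a function x :: nat => nat => nat, where x i t is
  the symbol on link i at slot t; outside i < C, t < n it is 0.
\<close>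

type_synonym netword = "nat \<Rightarrow> nat \<Rightarrow> nat"

definition valid_word :: "nat \<Rightarrow> (nat \<Rightarrow> nat) \<Rightarrow> nat \<Rightarrow> nat \<Rightarrow> netword \<Rightarrow> bool" where
  "valid_word C u q n x \<longleftrightarrow>
     (\<forall>i t. (i < C \<and> t < n \<longrightarrow> x i t < q ^ u i) \<and> (\<not> (i < C \<and> t < n) \<longrightarrow> x i t = 0))"

text \<open>Number of messages of a rate-R code of block length n (R in units of log q).\<close>
definition num_msgs :: "nat \<Rightarrow> nat \<Rightarrow> real \<Rightarrow> nat" where
  "num_msgs q n R = nat \<lceil>real q powr (real n * R)\<rceil>"

text \<open>Admissible adversary: disjoint link sets Zrw, Zro, Zwo within the C links with the
  given size bounds, and a jamming strategy J: J i t x is the symbol Calvin writes on link i at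
  slot t, which is an alphabet symbol and depends causally only on the symbols seen on
  Zr = Zrw \<union> Zro up to and including slot t.  (A randomised adversary is a mixture of
  these, so the worst-case average error is the same.)\<close>
definition admissible_adv ::
  "nat \<Rightarrow> (nat \<Rightarrow> nat) \<Rightarrow> nat \<Rightarrow> nat \<Rightarrow> nat \<times> nat \<times> nat \<Rightarrow>
   nat set \<Rightarrow> nat set \<Rightarrow> nat set \<Rightarrow> (nat \<Rightarrow> nat \<Rightarrow> netword \<Rightarrow> nat) \<Rightarrow> bool" where
  "admissible_adv C u q n z Zrw Zro Zwo J \<longleftrightarrow>
     (case z of (zrw, zro, zwo) \<Rightarrow>
       Zrw \<subseteq> {0..<C} \<and> Zro \<subseteq> {0..<C} \<and> Zwo \<subseteq> {0..<C} \<and>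
       Zrw \<inter> Zro = {} \<and> Zrw \<inter> Zwo = {} \<and> Zro \<inter> Zwo = {} \<and>
       card Zrw \<le> zrw \<and> card Zro \<le> zro \<and> card Zwo \<le> zwo \<and>
       (\<forall>i t x. J i t x < q ^ u i) \<and>
       (\<forall>i t x x'. (\<forall>j \<in> Zrw \<union> Zro. \<forall>s \<le> t. x j s = x' j s) \<longrightarrow> J i t x = J i t x'))"

definition received_ow :: "nat \<Rightarrow> nat \<Rightarrow> nat set \<Rightarrow> (nat \<Rightarrow> nat \<Rightarrow> netword \<Rightarrow> nat) \<Rightarrow> netword \<Rightarrow> netword" where
  "received_ow C n Zw J x =
     (\<lambda>i t. if i < C \<and> t < n then (if i \<in> Zw then J i t x else x i t) else 0)"

definition err_prob :: "nat \<Rightarrow> (nat \<Rightarrow> netword pmf) \<Rightarrow> (netword \<Rightarrow> nat) \<Rightarrow> (netword \<Rightarrow> netword) \<Rightarrow> real" where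
  "err_prob K enc dec chan =
     (\<Sum>m<K. measure_pmf.prob (enc m) {x. dec (chan x) \<noteq> m}) / real K"

definition good_code_ow ::
  "nat \<Rightarrow> (nat \<Rightarrow> nat) \<Rightarrow> nat \<times> nat \<times> nat \<Rightarrow> nat \<Rightarrow> nat \<Rightarrow> real \<Rightarrow> real \<Rightarrow> bool" where
  "good_code_ow C u z q n R \<epsilon> \<longleftrightarrow>
     (\<exists>(enc :: nat \<Rightarrow> netword pmf) (dec :: netword \<Rightarrow> nat).
        (\<forall>m < num_msgs q n R. set_pmf (enc m) \<subseteq> {x. valid_word C u q n x}) \<and>
        (\<forall>Zrw Zro Zwo J. admissible_adv C u q n z Zrw Zro Zwo J \<longrightarrow>
            err_prob (num_msgs q n R) enc dec (received_ow C n (Zrw \<union> Zwo) J) < \<epsilon>))"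

definition achievable_ow :: "nat \<Rightarrow> (nat \<Rightarrow> nat) \<Rightarrow> nat \<times> nat \<times> nat \<Rightarrow> real \<Rightarrow> bool" where
  "achievable_ow C u z R \<longleftrightarrow> R \<ge> 0 \<and>
     (\<forall>\<epsilon>>0. \<exists>Q. \<forall>q\<ge>Q. \<exists>N. \<forall>n\<ge>N. good_code_ow C u z q n R \<epsilon>)"

definition capacity_ow :: "nat \<Rightarrow> (nat \<Rightarrow> nat) \<Rightarrow> nat \<times> nat \<times> nat \<Rightarrow> real" where
  "capacity_ow C u z = Sup {R. achievable_ow C u z R}"

definition total_cap :: "nat \<Rightarrow> (nat \<Rightarrow> nat) \<Rightarrow> nat" where
  "total_cap C u = (\<Sum>i<C. u i)"

definition U_max :: "nat \<Rightarrow> (nat \<Rightarrow> nat) \<Rightarrow> nat \<Rightarrow> nat" where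
  "U_max C u w = Max {(\<Sum>i\<in>S. u i) | S. S \<subseteq> {0..<C} \<and> card S = w}"

end

theory Submission
  imports Defs "HOL-Computational_Algebra.Polynomial"
begin

text \<open>
  Converse: Calvin may overwrite with zeros the \<open>w = zrw + zwo\<close> links of largest total
  capacity; the received word then takes at most \<open>q ^ (n * (total_cap C u - U_max C u w))\<close>
  values, which bounds the number of messages that can be decoded reliably. If \<open>2 * w \<ge> C\<close>,
  Calvin splits the links into two halves he can both jam and plays on one half the codeword of a
  random message; the receiver cannot tell the genuine half from the fake one, so the rate is 0.

  Achievability: pick codewords that pairwise differ on more than \<open>w\<close> links (greedily, by
  counting). Every link then sends a fresh random key followed by polynomial hashes, under its
  key, of the data of all links. Being causal, Calvin must commit to corrupted data before any key
  is revealed, so a corrupted link passes the check of an honest link with probability at most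
  \<open>k / q\<close>. The receiver accepts the links vouched for by more than \<open>w\<close> links: these include all
  honest links and, with high probability, no corrupted one, and the accepted links determine the
  codeword.
\<close>

lemma card_funs_with_default:
  fixes P :: "'a set" and B :: "'a \<Rightarrow> 'b set" and d :: "'a \<Rightarrow> 'b"
  assumes "finite P" "\<And>p. p \<in> P \<Longrightarrow> finite (B p)"
  shows "card {f. (\<forall>p\<in>P. f p \<in> B p) \<and> (\<forall>p. p \<notin> P \<longrightarrow> f p = d p)} = (\<Prod>p\<in>P. card (B p))"
proof -
  let ?S = "{f. (\<forall>p\<in>P. f p \<in> B p) \<and> (\<forall>p. p \<notin> P \<longrightarrow> f p = d p)}"
  have "bij_betw (\<lambda>f. restrict f P) ?S (PiE P B)"
  proof (rule bij_betwI[where g = "\<lambda>g p. if p \<in> P then g p else d p"])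
    show "(\<lambda>f. restrict f P) \<in> ?S \<rightarrow> PiE P B" by auto
    show "(\<lambda>g p. if p \<in> P then g p else d p) \<in> PiE P B \<rightarrow> ?S" by (auto simp: PiE_def Pi_def)
    show "\<And>f. f \<in> ?S \<Longrightarrow> (\<lambda>p. if p \<in> P then restrict f P p else d p) = f"
      by (auto simp: fun_eq_iff)
    show "\<And>g. g \<in> PiE P B \<Longrightarrow> restrict (\<lambda>p. if p \<in> P then g p else d p) P = g"
      by (auto simp: fun_eq_iff PiE_def extensional_def)
  qed
  then have "card ?S = card (PiE P B)"
    by (rule bij_betw_same_card)
  also have "\<dots> = (\<Prod>p\<in>P. card (B p))"
    using assms by (simp add: card_PiE)
  finally show ?thesis .
qed

lemma card_words_on_rows:
  fixes F :: "nat set" and d :: netword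
  assumes "finite F"
  shows "card {x::netword. \<forall>i t. (i \<in> F \<and> t < D \<longrightarrow> x i t < q ^ u i) \<and>
                                 (\<not> (i \<in> F \<and> t < D) \<longrightarrow> x i t = d i t)}
       = q ^ (D * (\<Sum>i\<in>F. u i))"
    (is "card ?W = _")
proof -
  let ?P = "F \<times> {..<D}"
  let ?S = "{f. (\<forall>p\<in>?P. f p \<in> {..<q ^ u (fst p)}) \<and> (\<forall>p. p \<notin> ?P \<longrightarrow> f p = case_prod d p)}"
  have "?W = curry ` ?S"
  proof (intro equalityI subsetI)
    fix x assume "x \<in> ?W"
    then have "case_prod x \<in> ?S" by auto
    then show "x \<in> curry ` ?S" using image_eqI[where f = curry and x = "case_prod x" and A = ?S] by simp
  next
    fix x assume "x \<in> curry ` ?S"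
    then show "x \<in> ?W" by force
  qed
  moreover have "inj_on curry ?S"
    by (rule inj_on_inverseI[where g = case_prod]) simp
  ultimately have "card ?W = card ?S"
    by (simp add: card_image)
  also have "\<dots> = (\<Prod>p\<in>?P. card {..<q ^ u (fst p)})"
    using assms by (intro card_funs_with_default) auto
  also have "\<dots> = (\<Prod>i\<in>F. \<Prod>t<D. q ^ u i)"
    using assms prod.Sigma[of F "\<lambda>_. {..<D}" "\<lambda>i t. q ^ u i"] by (simp add: case_prod_beta)
  also have "\<dots> = (\<Prod>i\<in>F. q ^ (D * u i))"
    by (simp add: power_mult[symmetric] mult.commute)
  also have "\<dots> = q ^ (D * (\<Sum>i\<in>F. u i))"
    by (simp add: power_sum sum_distrib_left)
  finally show ?thesis .
qed

lemma valid_word_set_eq: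
  "{x. valid_word C u q n x} =
     {x. \<forall>i t. (i \<in> {..<C} \<and> t < n \<longrightarrow> x i t < q ^ u i) \<and> (\<not> (i \<in> {..<C} \<and> t < n) \<longrightarrow> x i t = 0)}"
  unfolding valid_word_def by auto

lemma card_valid_words: "card {x. valid_word C u q n x} = q ^ (n * total_cap C u)"
  unfolding valid_word_set_eq total_cap_def by (rule card_words_on_rows) simp

lemma finite_valid_words:
  assumes "0 < q"
  shows "finite {x. valid_word C u q n x}"
  using card_valid_words[of C u q n] assms by (metis card.infinite power_not_zero less_irrefl)

lemma valid_word_less:
  assumes "valid_word C u q n x" "0 < q"
  shows "x i t < q ^ u i"
  using assms unfolding valid_word_def by (metis zero_less_power)

lemma finite_U_max_set: "finite {(\<Sum>i\<in>S. u i) | S. S \<subseteq> {0..<(C::nat)} \<and> card S = w}"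
proof -
  have "{(\<Sum>i\<in>S. u i) | S. S \<subseteq> {0..<C} \<and> card S = w} \<subseteq> (\<lambda>S. \<Sum>i\<in>S. u i) ` Pow {0..<C}"
    by auto
  then show ?thesis by (rule finite_subset) auto
qed

lemma U_max_attained:
  assumes "w \<le> C"
  obtains S where "S \<subseteq> {0..<C}" "card S = w" "(\<Sum>i\<in>S. u i) = U_max C u w"
proof -
  obtain S where "S \<subseteq> {0..<C}" "card S = w"
    using assms obtain_subset_with_card_n[of w "{0..<C}"] by auto
  then have "U_max C u w \<in> {(\<Sum>i\<in>S. u i) | S. S \<subseteq> {0..<C} \<and> card S = w}"
    unfolding U_max_def by (intro Max_in finite_U_max_set) auto
  then show ?thesis using that by auto
qed

lemma sum_le_U_max:
  assumes "S \<subseteq> {0..<C}" "card S \<le> w" "w \<le> C"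
  shows "(\<Sum>i\<in>S. u i) \<le> U_max C u w"
proof -
  have fin: "finite S" using assms(1) finite_subset by blast
  then have "w - card S \<le> card ({0..<C} - S)"
    using assms by (simp add: card_Diff_subset)
  then obtain T where T: "T \<subseteq> {0..<C} - S" "card T = w - card S"
    by (meson obtain_subset_with_card_n)
  have finT: "finite T" using T(1) finite_subset by blast
  have "card (S \<union> T) = card S + card T"
    using T(1) fin finT by (intro card_Un_disjoint) auto
  then have "(\<Sum>i\<in>S \<union> T. u i) \<in> {(\<Sum>i\<in>S. u i) | S. S \<subseteq> {0..<C} \<and> card S = w}"
    using T assms by (intro CollectI exI[of _ "S \<union> T"]) auto
  then have "(\<Sum>i\<in>S \<union> T. u i) \<le> U_max C u w"
    unfolding U_max_def by (rule Max_ge[OF finite_U_max_set])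
  moreover have "(\<Sum>i\<in>S. u i) \<le> (\<Sum>i\<in>S \<union> T. u i)"
    using fin finT by (intro sum_mono2) auto
  ultimately show ?thesis by linarith
qed

lemma total_cap_split:
  assumes "A \<subseteq> {0..<C}"
  shows "total_cap C u = (\<Sum>i\<in>A. u i) + (\<Sum>i\<in>{0..<C} - A. u i)"
  using assms sum.subset_diff[of A "{0..<C}" u] unfolding total_cap_def lessThan_atLeast0 by simp

lemma U_max_le_total_cap:
  assumes "w \<le> C"
  shows "U_max C u w \<le> total_cap C u"
proof -
  obtain S where "S \<subseteq> {0..<C}" "(\<Sum>i\<in>S. u i) = U_max C u w"
    using U_max_attained[OF assms] by metis
  then show ?thesis using total_cap_split[of S C u] by simp
qed

lemma num_msgs_ge: "real q powr (real n * R) \<le> real (num_msgs q n R)"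
  unfolding num_msgs_def by linarith

lemma num_msgs_pos:
  assumes "0 < q"
  shows "0 < num_msgs q n R"
proof -
  have "0 < real q powr (real n * R)" using assms by simp
  then show ?thesis using num_msgs_ge[of q n R] by linarith
qed

lemma num_msgs_le_twice:
  assumes "1 \<le> q" "0 \<le> R"
  shows "real (num_msgs q n R) \<le> 2 * real q powr (real n * R)"
proof -
  have one_le: "1 \<le> real q powr (real n * R)"
    using assms by (intro ge_one_powr_ge_zero) auto
  then have "real (num_msgs q n R) = real_of_int \<lceil>real q powr (real n * R)\<rceil>"
    unfolding num_msgs_def by simp
  then show ?thesis using one_le by linarith
qed

lemma prob_decoded_le_card:
  fixes p :: "'a pmf" and chan :: "'a \<Rightarrow> 'b"
  assumes "finite Y" "set_pmf p \<subseteq> V" "chan ` V \<subseteq> Y"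
  shows "measure_pmf.prob p {x. dec (chan x) = m} \<le> real (card (Y \<inter> {y. dec y = m}))"
proof (cases "Y \<inter> {y. dec y = m} = {}")
  case True
  then have "set_pmf p \<inter> {x. dec (chan x) = m} = {}" using assms by blast
  then have "measure_pmf.prob p {x. dec (chan x) = m} = 0" by (simp add: measure_pmf_zero_iff)
  then show ?thesis by simp
next
  case False
  then have "1 \<le> card (Y \<inter> {y. dec y = m})"
    using assms(1) by (simp add: Suc_le_eq card_gt_0_iff)
  then show ?thesis by (simp add: order_trans[OF measure_pmf.prob_le_1])
qed

text \<open>Every received word decodes to a single message, so at most \<open>card Y\<close> messages can be decoded
  correctly.\<close>

lemma err_prob_ge_range:
  fixes enc :: "nat \<Rightarrow> netword pmf"
  assumes "finite Y" "\<And>m. m < K \<Longrightarrow> set_pmf (enc m) \<subseteq> V" "chan ` V \<subseteq> Y" "0 < K"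
  shows "1 - real (card Y) / real K \<le> err_prob K enc dec chan"
proof -
  have compl: "measure_pmf.prob (enc m) {x. dec (chan x) \<noteq> m} =
                 1 - measure_pmf.prob (enc m) {x. dec (chan x) = m}" for m
  proof -
    have "{x. dec (chan x) \<noteq> m} = UNIV - {x. dec (chan x) = m}" by auto
    then show ?thesis using measure_pmf.prob_compl[of "{x. dec (chan x) = m}" "enc m"] by simp
  qed
  have "(\<Sum>m<K. measure_pmf.prob (enc m) {x. dec (chan x) = m}) \<le> (\<Sum>m<K. real (card (Y \<inter> {y. dec y = m})))"
    using assms by (intro sum_mono prob_decoded_le_card) auto
  also have "\<dots> = real (card (\<Union>m<K. Y \<inter> {y. dec y = m}))"
    using assms(1) by (subst card_UN_disjoint) auto
  also have "\<dots> \<le> real (card Y)"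
    using assms(1) by (intro of_nat_mono card_mono) auto
  finally have "(\<Sum>m<K. measure_pmf.prob (enc m) {x. dec (chan x) = m}) \<le> real (card Y)" .
  then have "real K - real (card Y) \<le> (\<Sum>m<K. measure_pmf.prob (enc m) {x. dec (chan x) \<noteq> m})"
    unfolding compl by (simp add: sum_subtractf)
  then have "(real K - real (card Y)) / real K \<le> err_prob K enc dec chan"
    unfolding err_prob_def using assms(4) by (intro divide_right_mono) auto
  then show ?thesis
    using assms(4) by (simp add: diff_divide_distrib)
qed

lemma err_prob_eq_sum:
  assumes "finite V" "\<And>m. m < K \<Longrightarrow> set_pmf (enc m) \<subseteq> V"
  shows "err_prob K enc dec chan =
           (\<Sum>m<K. \<Sum>x\<in>V. pmf (enc m) x * of_bool (dec (chan x) \<noteq> m)) / real K"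
proof -
  have "measure_pmf.prob (enc m) {x. dec (chan x) \<noteq> m} =
          (\<Sum>x\<in>V. pmf (enc m) x * of_bool (dec (chan x) \<noteq> m))" if "m < K" for m
  proof -
    have "{x. dec (chan x) \<noteq> m} \<inter> set_pmf (enc m) = ({x. dec (chan x) \<noteq> m} \<inter> V) \<inter> set_pmf (enc m)"
      using assms(2)[OF that] by auto
    then have "measure_pmf.prob (enc m) {x. dec (chan x) \<noteq> m} =
            measure_pmf.prob (enc m) ({x. dec (chan x) \<noteq> m} \<inter> V)"
      by (metis measure_Int_set_pmf)
    also have "\<dots> = (\<Sum>x\<in>V \<inter> {x. dec (chan x) \<noteq> m}. pmf (enc m) x)"
      using assms(1) by (simp add: measure_measure_pmf_finite Int_commute)
    also have "\<dots> = (\<Sum>x\<in>V. if dec (chan x) \<noteq> m then pmf (enc m) x else 0)"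
      using assms(1) by (simp add: sum.inter_restrict)
    also have "\<dots> = (\<Sum>x\<in>V. pmf (enc m) x * of_bool (dec (chan x) \<noteq> m))"
      by (intro sum.cong) auto
    finally show ?thesis .
  qed
  then show ?thesis unfolding err_prob_def by simp
qed

section \<open>Converse bounds\<close>

lemma achievable_owE:
  assumes "achievable_ow C u z R" "0 < \<delta>" "0 < \<epsilon>"
  obtains q n where "2 \<le> q" "1 \<le> real n * \<delta>" "good_code_ow C u z q n R \<epsilon>"
proof -
  obtain Q where Q: "\<forall>q\<ge>Q. \<exists>N. \<forall>n\<ge>N. good_code_ow C u z q n R \<epsilon>"
    using assms(1,3) unfolding achievable_ow_def by blast
  define q where "q = max Q 2"
  obtain N where N: "\<forall>n\<ge>N. good_code_ow C u z q n R \<epsilon>"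
    using Q[rule_format, of q] by (auto simp: q_def)
  define n where "n = max N (nat \<lceil>1 / \<delta>\<rceil>)"
  have "1 / \<delta> \<le> real n" unfolding n_def by linarith
  then have "1 \<le> real n * \<delta>" using assms(2) by (simp add: field_simps)
  moreover have "good_code_ow C u z q n R \<epsilon>" using N unfolding n_def by simp
  ultimately show ?thesis using that[of q n] unfolding q_def by simp
qed

lemma num_msgs_ge_twice:
  assumes "2 \<le> q" "1 \<le> real n * (R - V)"
  shows "2 * real q powr (real n * V) \<le> real (num_msgs q n R)"
proof -
  have "real q powr 1 \<le> real q powr (real n * (R - V))"
    using assms by (intro powr_mono) auto
  then have "2 \<le> real q powr (real n * (R - V))"
    using assms(1) by simp
  then have "2 * real q powr (real n * V) \<le> real q powr (real n * (R - V)) * real q powr (real n * V)"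
    by (intro mult_right_mono) auto
  also have "\<dots> = real q powr (real n * R)"
    by (simp add: powr_add[symmetric] algebra_simps)
  finally show ?thesis using num_msgs_ge[of q n R] by linarith
qed

lemma admissible_oblivious_adv:
  assumes "A \<subseteq> {0..<C}" "card A \<le> zrw + zwo" "\<And>i t. f i t < q ^ u i"
  obtains Zrw Zwo where "A = Zrw \<union> Zwo"
    "admissible_adv C u q n (zrw, zro, zwo) Zrw {} Zwo (\<lambda>i t x. f i t)"
proof -
  have fin: "finite A" using assms(1) finite_subset by blast
  obtain X where X: "X \<subseteq> A" "card X = min zrw (card A)"
    using obtain_subset_with_card_n[of "min zrw (card A)" A] by auto
  then have "card (A - X) \<le> zwo"
    using assms(2) fin by (simp add: card_Diff_subset finite_subset)
  then show ?thesis
    using that[of X "A - X"] X assms unfolding admissible_adv_def by auto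
qed

lemma good_code_owE:
  assumes "good_code_ow C u (zrw, zro, zwo) q n R \<epsilon>"
  obtains enc dec
  where "\<And>m. m < num_msgs q n R \<Longrightarrow> set_pmf (enc m) \<subseteq> {x. valid_word C u q n x}"
    and "\<And>A f. A \<subseteq> {0..<C} \<Longrightarrow> card A \<le> zrw + zwo \<Longrightarrow> (\<And>i t. f i t < q ^ u i) \<Longrightarrow>
           err_prob (num_msgs q n R) enc dec (received_ow C n A (\<lambda>i t x. f i t)) < \<epsilon>"
proof -
  obtain enc dec
    where supp: "\<And>m. m < num_msgs q n R \<Longrightarrow> set_pmf (enc m) \<subseteq> {x. valid_word C u q n x}"
      and err: "\<And>Zrw Zro Zwo J. admissible_adv C u q n (zrw, zro, zwo) Zrw Zro Zwo J \<Longrightarrow>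
                  err_prob (num_msgs q n R) enc dec (received_ow C n (Zrw \<union> Zwo) J) < \<epsilon>"
    using assms unfolding good_code_ow_def by blast
  have jam: "err_prob (num_msgs q n R) enc dec (received_ow C n A (\<lambda>i t x. f i t)) < \<epsilon>"
    if A: "A \<subseteq> {0..<C}" "card A \<le> zrw + zwo" and f: "\<And>i t. f i t < q ^ u i" for A f
  proof -
    obtain Zrw Zwo where "A = Zrw \<union> Zwo" "admissible_adv C u q n (zrw, zro, zwo) Zrw {} Zwo (\<lambda>i t x. f i t)"
      by (rule admissible_oblivious_adv[OF A f])
    then show ?thesis
      using err[of Zrw "{}" Zwo "\<lambda>i t x. f i t"] by simp
  qed
  show ?thesis
    using supp jam by (rule that)
qed

lemma achievable_le_erasure_bound:
  assumes "achievable_ow C u (zrw, zro, zwo) R" "zrw + zwo \<le> C"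
  shows "R \<le> real (total_cap C u) - real (U_max C u (zrw + zwo))"
proof (rule ccontr)
  define V where "V = total_cap C u - U_max C u (zrw + zwo)"
  assume "\<not> ?thesis"
  then have "0 < R - real V"
    using U_max_le_total_cap[OF assms(2)] unfolding V_def by (simp add: of_nat_diff)
  then obtain q n where q: "2 \<le> q" and n: "1 \<le> real n * (R - real V)"
    and code: "good_code_ow C u (zrw, zro, zwo) q n R (1/5)"
    using achievable_owE[OF assms(1) \<open>0 < R - real V\<close>, of "1/5"] by auto
  define K where "K = num_msgs q n R"
  obtain enc dec
    where supp: "\<And>m. m < K \<Longrightarrow> set_pmf (enc m) \<subseteq> {x. valid_word C u q n x}"
      and jam: "\<And>A f. A \<subseteq> {0..<C} \<Longrightarrow> card A \<le> zrw + zwo \<Longrightarrow> (\<And>i t. f i t < q ^ u i) \<Longrightarrow>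
                  err_prob K enc dec (received_ow C n A (\<lambda>i t x. f i t)) < 1/5"
    using good_code_owE[OF code, folded K_def] by blast
  obtain A where A: "A \<subseteq> {0..<C}" "card A = zrw + zwo" "(\<Sum>i\<in>A. u i) = U_max C u (zrw + zwo)"
    using U_max_attained[OF assms(2)] by metis
  have err_A: "err_prob K enc dec (received_ow C n A (\<lambda>i t x. 0)) < 1/5"
    using jam[OF A(1), of "\<lambda>_ _. 0"] A(2) q by simp
  define Y where "Y = {y. \<forall>i t. (i \<in> {0..<C} - A \<and> t < n \<longrightarrow> y i t < q ^ u i) \<and>
                                 (\<not> (i \<in> {0..<C} - A \<and> t < n) \<longrightarrow> y i t = 0)}"
  have "card Y = q ^ (n * (\<Sum>i\<in>{0..<C} - A. u i))"
    unfolding Y_def by (rule card_words_on_rows) simp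
  then have card_Y: "card Y = q ^ (n * V)"
    unfolding V_def using total_cap_split[OF A(1), of u] A(3) by simp
  have range: "received_ow C n A (\<lambda>i t x. 0) ` {x. valid_word C u q n x} \<subseteq> Y"
    unfolding Y_def received_ow_def valid_word_def by auto
  have fin: "finite Y" using card_Y q by (intro card_ge_0_finite) simp
  have K_pos: "0 < K" unfolding K_def using q by (intro num_msgs_pos) simp
  have "1 - real (card Y) / real K \<le> err_prob K enc dec (received_ow C n A (\<lambda>i t x. 0))"
    by (rule err_prob_ge_range[OF fin _ range K_pos]) (rule supp)
  then have "1 - real (card Y) / real K < 1/5"
    using err_A by linarith
  then have "real K < 5/4 * real (card Y)"
    using K_pos by (simp add: field_simps)
  moreover have "2 * real (card Y) \<le> real K"
    using num_msgs_ge_twice[OF q n] q unfolding K_def card_Y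
    by (simp add: powr_realpow[symmetric])
  moreover have "0 < card Y" using card_Y q by simp
  ultimately show False by linarith
qed

lemma sum_weighted_le:
  assumes "\<And>m x. 0 \<le> a m x" "\<And>m. m < K \<Longrightarrow> (\<Sum>x\<in>V. a m x) = 1"
    and "\<And>x. x \<in> V \<Longrightarrow> f x \<le> c"
  shows "(\<Sum>m<K. \<Sum>x\<in>V. a m x * f x) \<le> real K * c"
proof -
  have "(\<Sum>m<K. \<Sum>x\<in>V. a m x * f x) \<le> (\<Sum>m<K. \<Sum>x\<in>V. a m x * c)"
    using assms by (intro sum_mono mult_left_mono) auto
  also have "\<dots> = (\<Sum>m<K. c)"
    using assms(2) by (simp add: sum_distrib_right[symmetric])
  finally show ?thesis by simp
qed

text \<open>If the received word \<open>g x' x\<close> can stem from message \<open>m\<close> sent as \<open>x\<close> as well as from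
  message \<open>m'\<close> sent as \<open>x'\<close>, then for \<open>m \<noteq> m'\<close> one of the two is decoded wrongly.\<close>

lemma sum_confusions_ge:
  fixes a :: "nat \<Rightarrow> 'x \<Rightarrow> real" and g :: "'x \<Rightarrow> 'x \<Rightarrow> nat"
  assumes nonneg: "\<And>m x. 0 \<le> a m x" and sum1: "\<And>m. m < K \<Longrightarrow> (\<Sum>x\<in>V. a m x) = 1"
  shows "real K * (real K - 1) \<le>
           (\<Sum>m<K. \<Sum>m'<K. \<Sum>x\<in>V. \<Sum>x'\<in>V. a m x * a m' x' *
              (of_bool (g x' x \<noteq> m) + of_bool (g x' x \<noteq> m')))"
    (is "_ \<le> (\<Sum>m<K. \<Sum>m'<K. ?P m m')")
proof -
  have "of_bool (m \<noteq> m') \<le> ?P m m'" if "m < K" "m' < K" for m m'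
  proof (cases "m = m'")
    case True
    then show ?thesis by (simp add: sum_nonneg nonneg)
  next
    case False
    then have "(\<Sum>x\<in>V. \<Sum>x'\<in>V. a m x * a m' x') \<le> ?P m m'"
      using nonneg by (intro sum_mono) auto
    also have "(\<Sum>x\<in>V. \<Sum>x'\<in>V. a m x * a m' x') = 1"
      using that by (simp add: sum_distrib_left[symmetric] sum_distrib_right[symmetric] sum1)
    finally show ?thesis using False by simp
  qed
  then have "(\<Sum>m<K. \<Sum>m'<K. of_bool (m \<noteq> m') :: real) \<le> (\<Sum>m<K. \<Sum>m'<K. ?P m m')"
    by (intro sum_mono) auto
  moreover have "(\<Sum>m'<K. of_bool (m \<noteq> m') :: real) = real K - 1" if "m < K" for m
    using that by (simp add: of_bool_not_iff sum_subtractf)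
  ultimately show ?thesis by simp
qed

lemma confusable_error_bound:
  fixes a :: "nat \<Rightarrow> 'x \<Rightarrow> real" and g :: "'x \<Rightarrow> 'x \<Rightarrow> nat"
  assumes nonneg: "\<And>m x. 0 \<le> a m x"
    and sum1: "\<And>m. m < K \<Longrightarrow> (\<Sum>x\<in>V. a m x) = 1"
    and err1: "\<And>x'. x' \<in> V \<Longrightarrow> (\<Sum>m<K. \<Sum>x\<in>V. a m x * of_bool (g x' x \<noteq> m)) \<le> \<epsilon> * real K"
    and err2: "\<And>x. x \<in> V \<Longrightarrow> (\<Sum>m<K. \<Sum>x'\<in>V. a m x' * of_bool (g x' x \<noteq> m)) \<le> \<epsilon> * real K"
  shows "real K - 1 \<le> 2 * \<epsilon> * real K"
proof -
  define E1 where "E1 x' = (\<Sum>m<K. \<Sum>x\<in>V. a m x * of_bool (g x' x \<noteq> m))" for x'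
  define E2 where "E2 x = (\<Sum>m<K. \<Sum>x'\<in>V. a m x' * of_bool (g x' x \<noteq> m))" for x
  have "(\<Sum>m'<K. \<Sum>x'\<in>V. a m' x' * E1 x') =
          (\<Sum>m'<K. \<Sum>x'\<in>V. \<Sum>m<K. \<Sum>x\<in>V. a m x * a m' x' * of_bool (g x' x \<noteq> m))"
    unfolding E1_def by (simp add: sum_distrib_left mult_ac)
  also have "\<dots> = (\<Sum>m'<K. \<Sum>m<K. \<Sum>x'\<in>V. \<Sum>x\<in>V. a m x * a m' x' * of_bool (g x' x \<noteq> m))"
    by (intro sum.cong refl sum.swap)
  also have "\<dots> = (\<Sum>m<K. \<Sum>m'<K. \<Sum>x'\<in>V. \<Sum>x\<in>V. a m x * a m' x' * of_bool (g x' x \<noteq> m))"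
    by (rule sum.swap)
  also have "\<dots> = (\<Sum>m<K. \<Sum>m'<K. \<Sum>x\<in>V. \<Sum>x'\<in>V. a m x * a m' x' * of_bool (g x' x \<noteq> m))"
    by (intro sum.cong refl sum.swap)
  finally have first: "(\<Sum>m'<K. \<Sum>x'\<in>V. a m' x' * E1 x') = \<dots>" .
  have "(\<Sum>m<K. \<Sum>x\<in>V. a m x * E2 x) =
          (\<Sum>m<K. \<Sum>x\<in>V. \<Sum>m'<K. \<Sum>x'\<in>V. a m x * a m' x' * of_bool (g x' x \<noteq> m'))"
    unfolding E2_def by (simp add: sum_distrib_left mult.assoc)
  also have "\<dots> = (\<Sum>m<K. \<Sum>m'<K. \<Sum>x\<in>V. \<Sum>x'\<in>V. a m x * a m' x' * of_bool (g x' x \<noteq> m'))"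
    by (intro sum.cong refl sum.swap)
  finally have second: "(\<Sum>m<K. \<Sum>x\<in>V. a m x * E2 x) = \<dots>" .
  have "real K * (real K - 1) \<le> (\<Sum>m'<K. \<Sum>x'\<in>V. a m' x' * E1 x') + (\<Sum>m<K. \<Sum>x\<in>V. a m x * E2 x)"
    using sum_confusions_ge[of a K V g, OF nonneg sum1]
    unfolding first second by (simp add: distrib_left sum.distrib)
  also have "\<dots> \<le> real K * (\<epsilon> * real K) + real K * (\<epsilon> * real K)"
    using err1 err2 unfolding E1_def E2_def by (intro add_mono sum_weighted_le[OF nonneg sum1]) auto
  finally have "real K * (real K - 1) \<le> real K * (2 * \<epsilon> * real K)"
    by (simp add: algebra_simps)
  then show ?thesis
    by (cases "K = 0") simp_all
qed

lemma achievable_le_zero_if_half_jammable: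
  assumes "achievable_ow C u (zrw, zro, zwo) R" "C \<le> 2 * (zrw + zwo)"
  shows "R \<le> 0"
proof (rule ccontr)
  assume "\<not> R \<le> 0"
  then obtain q n where q: "2 \<le> q" and n: "1 \<le> real n * R"
    and code: "good_code_ow C u (zrw, zro, zwo) q n R (1/5)"
    using achievable_owE[OF assms(1), of R "1/5"] by auto
  define K where "K = num_msgs q n R"
  have K2: "2 \<le> real K"
    using num_msgs_ge_twice[of q n R 0] q n unfolding K_def by simp
  obtain enc dec
    where supp: "\<And>m. m < K \<Longrightarrow> set_pmf (enc m) \<subseteq> {x. valid_word C u q n x}"
      and jam_any: "\<And>A f. A \<subseteq> {0..<C} \<Longrightarrow> card A \<le> zrw + zwo \<Longrightarrow> (\<And>i t. f i t < q ^ u i) \<Longrightarrow>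
                      err_prob K enc dec (received_ow C n A (\<lambda>i t x. f i t)) < 1/5"
    using good_code_owE[OF code, folded K_def] by blast
  define V where "V = {x. valid_word C u q n x}"
  have fin: "finite V" using q by (simp add: V_def finite_valid_words)
  define A where "A = {0..<C div 2}"
  define B where "B = {C div 2..<C}"
  define mix where "mix x' x = received_ow C n A (\<lambda>i t _. x' i t) x" for x' x
  have err_eq: "err_prob K enc dec chan =
                  (\<Sum>m<K. \<Sum>x\<in>V. pmf (enc m) x * of_bool (dec (chan x) \<noteq> m)) / real K" for chan
    using err_prob_eq_sum[OF fin] supp unfolding V_def by blast
  have jam: "err_prob K enc dec (received_ow C n S (\<lambda>i t _. x i t)) < 1/5"
    if x: "x \<in> V" and S: "S \<subseteq> {0..<C}" "card S \<le> zrw + zwo" for x S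
  proof (rule jam_any[OF S])
    show "x i t < q ^ u i" for i t
      using x q by (simp add: V_def valid_word_less)
  qed
  have "real K - 1 \<le> 2 * (1/5) * real K"
  proof (rule confusable_error_bound[of "\<lambda>m x. pmf (enc m) x" K V "\<lambda>x' x. dec (mix x' x)"])
    show "(\<Sum>x\<in>V. pmf (enc m) x) = 1" if "m < K" for m
      using supp[OF that] fin unfolding V_def by (intro sum_pmf_eq_1) auto
  next
    fix x' assume "x' \<in> V"
    then have "err_prob K enc dec (mix x') < 1/5"
      using jam[of x' A] assms(2) unfolding mix_def A_def by fastforce
    then show "(\<Sum>m<K. \<Sum>x\<in>V. pmf (enc m) x * of_bool (dec (mix x' x) \<noteq> m)) \<le> 1/5 * real K"
      using K2 unfolding err_eq by (simp add: field_simps)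
  next
    fix x assume "x \<in> V"
    moreover have "received_ow C n B (\<lambda>i t _. x i t) = (\<lambda>x'. mix x' x)"
      unfolding received_ow_def mix_def A_def B_def by (auto simp: fun_eq_iff)
    ultimately have "err_prob K enc dec (\<lambda>x'. mix x' x) < 1/5"
      using jam[of x B] assms(2) unfolding B_def by fastforce
    then show "(\<Sum>m<K. \<Sum>x'\<in>V. pmf (enc m) x' * of_bool (dec (mix x' x) \<noteq> m)) \<le> 1/5 * real K"
      using K2 unfolding err_eq by (simp add: field_simps)
  qed simp
  then show False using K2 by linarith
qed

section \<open>Polynomial hashing\<close>

definition digit :: "nat \<Rightarrow> nat \<Rightarrow> nat \<Rightarrow> nat" where
  "digit q s h = h div q ^ s mod q"

lemma digit_less: "0 < q \<Longrightarrow> digit q s h < q"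
  unfolding digit_def by simp

lemma sum_digits: "(\<Sum>s<L. digit q s h * q ^ s) = h mod q ^ L"
proof (induction L)
  case (Suc L)
  have "(\<Sum>s<Suc L. digit q s h * q ^ s) = h mod q ^ L + digit q L h * q ^ L"
    using Suc by simp
  also have "\<dots> = h mod (q ^ L * q)"
    unfolding mod_mult2_eq[of h "q ^ L" q] digit_def by simp
  finally show ?case by (simp add: mult.commute)
qed simp

lemma digits_inj:
  assumes "h < q ^ L" "h' < q ^ L" "\<And>s. s < L \<Longrightarrow> digit q s h = digit q s h'"
  shows "h = h'"
proof -
  have "(\<Sum>s<L. digit q s h * q ^ s) = (\<Sum>s<L. digit q s h' * q ^ s)"
    using assms(3) by simp
  then show ?thesis
    using assms(1,2) by (simp add: sum_digits)
qed

lemma base_expansion_less: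
  fixes f :: "nat \<Rightarrow> nat"
  assumes "\<And>s. s < L \<Longrightarrow> f s < b"
  shows "(\<Sum>s<L. f s * b ^ s) < b ^ L"
  using assms
proof (induction L)
  case (Suc L)
  have "(\<Sum>s<Suc L. f s * b ^ s) < b ^ L + f L * b ^ L"
    using Suc by simp
  also have "\<dots> = (f L + 1) * b ^ L"
    by simp
  also have "\<dots> \<le> b * b ^ L"
    using Suc.prems[of L] by (intro mult_right_mono) auto
  finally show ?case by simp
qed simp

lemma base_expansion_inj:
  fixes f g :: "nat \<Rightarrow> nat"
  assumes "\<And>s. s < L \<Longrightarrow> f s < b" "\<And>s. s < L \<Longrightarrow> g s < b"
    and "(\<Sum>s<L. f s * b ^ s) = (\<Sum>s<L. g s * b ^ s)"
  shows "\<forall>s<L. f s = g s"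
  using assms
proof (induction L)
  case (Suc L)
  have f_less: "(\<Sum>s<L. f s * b ^ s) < b ^ L" and g_less: "(\<Sum>s<L. g s * b ^ s) < b ^ L"
    using Suc.prems by (auto intro!: base_expansion_less)
  have eq: "(\<Sum>s<L. f s * b ^ s) + f L * b ^ L = (\<Sum>s<L. g s * b ^ s) + g L * b ^ L"
    using Suc.prems(3) by simp
  have "0 < b ^ L" using Suc.prems(1)[of L] by simp
  from arg_cong[OF eq, of "\<lambda>h. h div b ^ L"] have "f L = g L"
    using f_less g_less \<open>0 < b ^ L\<close> by simp
  moreover from arg_cong[OF eq, of "\<lambda>h. h mod b ^ L"] have "\<forall>s<L. f s = g s"
    using f_less g_less Suc.prems by (intro Suc.IH) auto
  ultimately show ?case by (auto simp: less_Suc_eq)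
qed simp

lemma index_less_mult:
  assumes "j < k" "s < c"
  shows "j * c + s < k * (c::nat)"
proof -
  have "j * c + s < Suc j * c" using assms(2) by simp
  also have "\<dots> \<le> k * c" using assms(1) by (intro mult_right_mono) auto
  finally show ?thesis .
qed

text \<open>A word of \<open>k * c\<close> symbols below \<open>b\<close> is read as \<open>k\<close> chunks of \<open>c\<close> base-\<open>b\<close> digits, which
  are the coefficients of a polynomial of degree below \<open>k\<close>, evaluated at the key \<open>r\<close>.\<close>

definition chunk_value :: "nat \<Rightarrow> nat \<Rightarrow> (nat \<Rightarrow> nat) \<Rightarrow> nat \<Rightarrow> nat" where
  "chunk_value b c v j = (\<Sum>s<c. v (j * c + s) * b ^ s)"

definition poly_hash :: "nat \<Rightarrow> nat \<Rightarrow> nat \<Rightarrow> nat \<Rightarrow> (nat \<Rightarrow> nat) \<Rightarrow> nat" where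
  "poly_hash b c k r v = (\<Sum>j<k. chunk_value b c v j * r ^ j)"

lemma poly_hash_cong:
  assumes "\<And>t. t < k * c \<Longrightarrow> v t = v' t"
  shows "poly_hash b c k r v = poly_hash b c k r v'"
  unfolding poly_hash_def chunk_value_def using assms index_less_mult by (intro sum.cong refl) auto

lemma chunk_value_less:
  assumes "\<And>t. t < k * c \<Longrightarrow> v t < b" "j < k"
  shows "chunk_value b c v j < b ^ c"
  unfolding chunk_value_def using assms index_less_mult by (intro base_expansion_less) auto

lemma geometric_sum_less:
  assumes "2 \<le> (q::nat)"
  shows "(\<Sum>j<k. q ^ j) < q ^ k"
proof (induction k)
  case (Suc k)
  then have "(\<Sum>j<Suc k. q ^ j) < 2 * q ^ k" by simp
  also have "\<dots> \<le> q * q ^ k" using assms by (intro mult_right_mono) auto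
  finally show ?case by simp
qed simp

lemma poly_hash_less:
  assumes "\<And>t. t < k * c \<Longrightarrow> v t < b" "r < q" "2 \<le> q" "0 < b"
  shows "poly_hash b c k r v < b ^ c * q ^ k"
proof -
  have "poly_hash b c k r v \<le> (\<Sum>j<k. (b ^ c - 1) * q ^ j)"
    unfolding poly_hash_def
  proof (intro sum_mono mult_le_mono)
    show "chunk_value b c v j \<le> b ^ c - 1" if "j \<in> {..<k}" for j
      using chunk_value_less[OF assms(1)] that by fastforce
    show "r ^ j \<le> q ^ j" for j
      using assms(2) by (intro power_mono) auto
  qed
  also have "\<dots> = (b ^ c - 1) * (\<Sum>j<k. q ^ j)"
    by (simp add: sum_distrib_left)
  also have "\<dots> \<le> (b ^ c - 1) * q ^ k"
    using less_imp_le[OF geometric_sum_less[OF assms(3), of k]] by (intro mult_left_mono) auto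
  also have "\<dots> < b ^ c * q ^ k"
    using assms by simp
  finally show ?thesis .
qed

lemma poly_hash_difference:
  assumes x: "\<And>t. t < k * c \<Longrightarrow> x t < b" and y: "\<And>t. t < k * c \<Longrightarrow> y t < b"
    and differ: "t0 < k * c" "x t0 \<noteq> y t0"
  obtains p :: "int poly" where "p \<noteq> 0" "degree p \<le> k"
    "\<And>r. poly p (int r) = int (poly_hash b c k r x) - int (poly_hash b c k r y)"
proof -
  have "0 < c" using differ(1) by (cases c) auto
  define j0 where "j0 = t0 div c"
  have j0: "j0 < k" unfolding j0_def using differ(1) \<open>0 < c\<close> by (simp add: div_less_iff_less_mult)
  have t0: "t0 = j0 * c + t0 mod c" unfolding j0_def by simp
  have "chunk_value b c x j0 \<noteq> chunk_value b c y j0"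
  proof
    assume "chunk_value b c x j0 = chunk_value b c y j0"
    then have "\<forall>s<c. x (j0 * c + s) = y (j0 * c + s)"
      unfolding chunk_value_def using x y index_less_mult[OF j0] by (intro base_expansion_inj) auto
    then show False using differ t0 \<open>0 < c\<close> by (metis mod_less_divisor)
  qed
  define p :: "int poly"
    where "p = (\<Sum>j<k. monom (int (chunk_value b c x j) - int (chunk_value b c y j)) j)"
  have coeff_p: "coeff p j = (if j < k then int (chunk_value b c x j) - int (chunk_value b c y j) else 0)" for j
    unfolding p_def coeff_sum coeff_monom by (auto simp: sum.delta)
  show ?thesis
  proof
    show "p \<noteq> 0"
      using coeff_p[of j0] j0 \<open>chunk_value b c x j0 \<noteq> chunk_value b c y j0\<close> by auto
    show "degree p \<le> k"
      by (rule degree_le) (auto simp: coeff_p)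
    show "poly p (int r) = int (poly_hash b c k r x) - int (poly_hash b c k r y)" for r
      unfolding p_def poly_sum poly_monom poly_hash_def
      by (simp add: of_nat_sum sum_subtractf algebra_simps)
  qed
qed

lemma poly_hash_collisions:
  assumes "\<And>t. t < k * c \<Longrightarrow> x t < b" "\<And>t. t < k * c \<Longrightarrow> y t < b"
    and "t0 < k * c" "x t0 \<noteq> y t0"
  shows finite_poly_hash_collisions: "finite {r. poly_hash b c k r x = poly_hash b c k r y}"
    and card_poly_hash_collisions: "card {r. poly_hash b c k r x = poly_hash b c k r y} \<le> k"
proof -
  obtain p where p: "p \<noteq> 0" "degree p \<le> k"
    "\<And>r. poly p (int r) = int (poly_hash b c k r x) - int (poly_hash b c k r y)"
    using poly_hash_difference[where x = x and y = y and b = b and c = c and k = k, OF assms] by blast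
  have sub: "int ` {r. poly_hash b c k r x = poly_hash b c k r y} \<subseteq> {z. poly p z = 0}"
    using p(3) by auto
  have roots: "finite {z. poly p z = 0}"
    using poly_roots_finite[OF p(1)] .
  then show "finite {r. poly_hash b c k r x = poly_hash b c k r y}"
    using finite_subset[OF sub] by (simp add: finite_image_iff)
  have "card {r. poly_hash b c k r x = poly_hash b c k r y} = card (int ` {r. poly_hash b c k r x = poly_hash b c k r y})"
    by (simp add: card_image)
  also have "\<dots> \<le> card {z. poly p z = 0}"
    using card_mono[OF roots sub] .
  also have "\<dots> \<le> k"
    using card_poly_roots_bound[OF p(1)] p(2) by linarith
  finally show "card {r. poly_hash b c k r x = poly_hash b c k r y} \<le> k" .
qed

section \<open>Codes with large link distance\<close>

lemma exists_separated_family: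
  fixes W :: "'a set" and close :: "'a \<Rightarrow> 'a \<Rightarrow> bool"
  assumes ball: "\<And>c. c \<in> W \<Longrightarrow> card {x \<in> W. close c x} \<le> N"
    and sym: "\<And>x y. close x y \<Longrightarrow> close y x" and big: "K * N < card W"
  shows "\<exists>f. (\<forall>m<K. f m \<in> W) \<and> (\<forall>m m'. m < K \<longrightarrow> m' < K \<longrightarrow> m \<noteq> m' \<longrightarrow> \<not> close (f m) (f m'))"
  using big
proof (induction K)
  case (Suc K)
  then obtain f where f: "\<forall>m<K. f m \<in> W"
      "\<forall>m m'. m < K \<longrightarrow> m' < K \<longrightarrow> m \<noteq> m' \<longrightarrow> \<not> close (f m) (f m')"
    by fastforce
  define Bad where "Bad = (\<Union>m<K. {x \<in> W. close (f m) x})"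
  have "card Bad \<le> (\<Sum>m<K. card {x \<in> W. close (f m) x})"
    unfolding Bad_def by (rule card_UN_le) simp
  also have "\<dots> \<le> K * N"
    using f(1) ball sum_bounded_above[of "{..<K}" "\<lambda>m. card {x \<in> W. close (f m) x}" N] by simp
  also have "\<dots> < card W"
    using Suc.prems by simp
  finally have "Bad \<noteq> W" by auto
  moreover have "Bad \<subseteq> W" unfolding Bad_def by auto
  ultimately obtain x where x: "x \<in> W" "x \<notin> Bad" by blast
  have far: "\<not> close (f m) x" "\<not> close x (f m)" if "m < K" for m
    using that x sym unfolding Bad_def by blast+
  have "\<not> close ((f(K := x)) m) ((f(K := x)) m')"
    if "m < Suc K" "m' < Suc K" "m \<noteq> m'" for m m'
    using that f(2) far by (auto simp: less_Suc_eq)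
  moreover have "\<forall>m<Suc K. (f(K := x)) m \<in> W"
    using f(1) x(1) by (simp add: less_Suc_eq)
  ultimately show ?case by blast
qed simp

definition link_distance :: "nat \<Rightarrow> nat \<Rightarrow> netword \<Rightarrow> netword \<Rightarrow> nat" where
  "link_distance C D x y = card {i. i < C \<and> (\<exists>t<D. x i t \<noteq> y i t)}"

lemma link_distance_sym: "link_distance C D x y = link_distance C D y x"
  unfolding link_distance_def by (metis (full_types))

text \<open>A word within link distance \<open>w\<close> of \<open>c\<close> differs from \<open>c\<close> only on a set \<open>S\<close> of at most \<open>w\<close>
  links, and there are at most \<open>2 ^ C\<close> such sets.\<close>

lemma card_link_distance_ball:
  assumes q: "0 < q" and w: "w \<le> C" and c: "valid_word C u q D c"
  shows "card {x \<in> {x. valid_word C u q D x}. link_distance C D c x \<le> w} \<le> 2 ^ C * q ^ (D * U_max C u w)"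
proof -
  define SS where "SS = {S. S \<subseteq> {0..<C} \<and> card S \<le> w}"
  define Ag where "Ag S = {x. \<forall>i t. (i \<in> S \<and> t < D \<longrightarrow> x i t < q ^ u i) \<and>
                                    (\<not> (i \<in> S \<and> t < D) \<longrightarrow> x i t = c i t)}" for S
  have SS_Pow: "SS \<subseteq> Pow {0..<C}" unfolding SS_def by auto
  then have fin_SS: "finite SS" by (rule finite_subset) simp
  have card_Ag: "card (Ag S) = q ^ (D * (\<Sum>i\<in>S. u i))" if "S \<in> SS" for S
    unfolding Ag_def using that by (intro card_words_on_rows) (auto simp: SS_def intro: finite_subset)
  have "{x \<in> {x. valid_word C u q D x}. link_distance C D c x \<le> w} \<subseteq> (\<Union>S\<in>SS. Ag S)"
  proof
    fix x assume "x \<in> {x \<in> {x. valid_word C u q D x}. link_distance C D c x \<le> w}"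
    then have x: "valid_word C u q D x" "link_distance C D c x \<le> w" by auto
    define S where "S = {i. i < C \<and> (\<exists>t<D. c i t \<noteq> x i t)}"
    have "S \<in> SS" using x(2) unfolding SS_def S_def link_distance_def by auto
    moreover have "x i t = c i t" if "\<not> (i \<in> S \<and> t < D)" for i t
      using that x(1) c unfolding S_def valid_word_def by (cases "i < C \<and> t < D") auto
    then have "x \<in> Ag S"
      using x(1) unfolding Ag_def S_def valid_word_def by auto
    ultimately show "x \<in> (\<Union>S\<in>SS. Ag S)" by blast
  qed
  moreover have "finite (Ag S)" if "S \<in> SS" for S
    using card_Ag[OF that] q by (intro card_ge_0_finite) simp
  ultimately have "card {x \<in> {x. valid_word C u q D x}. link_distance C D c x \<le> w} \<le> card (\<Union>S\<in>SS. Ag S)"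
    using fin_SS by (intro card_mono) auto
  also have "\<dots> \<le> (\<Sum>S\<in>SS. card (Ag S))"
    by (rule card_UN_le[OF fin_SS])
  also have "\<dots> \<le> (\<Sum>S\<in>SS. q ^ (D * U_max C u w))"
    using q w by (intro sum_mono) (auto simp: card_Ag SS_def intro!: power_increasing sum_le_U_max)
  also have "\<dots> \<le> 2 ^ C * q ^ (D * U_max C u w)"
    using card_mono[OF _ SS_Pow] by (simp add: card_Pow)
  finally show ?thesis .
qed

lemma exists_far_codewords:
  assumes "0 < q" "w \<le> C" "K * (2 ^ C * q ^ (D * U_max C u w)) < q ^ (D * total_cap C u)"
  shows "\<exists>cw. (\<forall>m<K. valid_word C u q D (cw m)) \<and>
              (\<forall>m m'. m < K \<longrightarrow> m' < K \<longrightarrow> m \<noteq> m' \<longrightarrow> w < link_distance C D (cw m) (cw m'))"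
proof -
  have "\<exists>f. (\<forall>m<K. f m \<in> {x. valid_word C u q D x}) \<and>
            (\<forall>m m'. m < K \<longrightarrow> m' < K \<longrightarrow> m \<noteq> m' \<longrightarrow> \<not> link_distance C D (f m) (f m') \<le> w)"
    by (rule exists_separated_family)
       (use card_link_distance_ball[OF assms(1,2)] link_distance_sym assms(3) in
         \<open>auto simp: card_valid_words\<close>)
  then show ?thesis by (auto simp: not_le)
qed

definition keys :: "nat \<Rightarrow> nat \<Rightarrow> (nat \<Rightarrow> nat) set" where
  "keys C q = PiE_dflt {..<C} 0 (\<lambda>_. {..<q})"

lemma finite_keys: "finite (keys C q)"
  unfolding keys_def by (rule finite_PiE_dflt) auto

lemma card_keys: "card (keys C q) = q ^ C"
  unfolding keys_def by (simp add: card_PiE_dflt)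

lemma keys_less: "r \<in> keys C q \<Longrightarrow> j < C \<Longrightarrow> r j < q"
  unfolding keys_def PiE_dflt_def by auto

lemma zero_key: "0 < q \<Longrightarrow> (\<lambda>_. 0) \<in> keys C q"
  unfolding keys_def PiE_dflt_def by auto

lemma card_keys_coordinate_in:
  assumes "j < C"
  shows "card {r \<in> keys C q. r j \<in> R} = card (R \<inter> {..<q}) * q ^ (C - 1)"
proof -
  define B where "B p = (if p = j then R \<inter> {..<q} else {..<q})" for p
  have "{r \<in> keys C q. r j \<in> R} = PiE_dflt {..<C} 0 B"
    using assms unfolding keys_def PiE_dflt_def B_def by auto
  then have "card {r \<in> keys C q. r j \<in> R} = (\<Prod>p<C. card (B p))"
    by (simp add: card_PiE_dflt B_def)
  also have "\<dots> = card (B j) * (\<Prod>p\<in>{..<C} - {j}. card (B p))"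
    using assms by (intro prod.remove) auto
  also have "(\<Prod>p\<in>{..<C} - {j}. card (B p)) = q ^ (C - 1)"
    using assms by (simp add: B_def card_Diff_singleton)
  finally show ?thesis by (simp add: B_def)
qed

lemma card_keys_hash_collision:
  assumes j: "j < C" and x: "\<And>t. t < k * c \<Longrightarrow> x t < b" and y: "\<And>t. t < k * c \<Longrightarrow> y t < b"
    and differ: "\<exists>t<k * c. x t \<noteq> y t"
  shows "card {r \<in> keys C q. poly_hash b c k (r j) x = poly_hash b c k (r j) y} \<le> k * q ^ (C - 1)"
proof -
  let ?R = "{\<rho>. poly_hash b c k \<rho> x = poly_hash b c k \<rho> y}"
  obtain t0 where t0: "t0 < k * c" "x t0 \<noteq> y t0" using differ by blast
  have "card {r \<in> keys C q. poly_hash b c k (r j) x = poly_hash b c k (r j) y} = card (?R \<inter> {..<q}) * q ^ (C - 1)"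
    using card_keys_coordinate_in[OF j, of q ?R] by simp
  also have "\<dots> \<le> card ?R * q ^ (C - 1)"
    using finite_poly_hash_collisions[of k c x b y t0, OF x y t0] by (intro mult_right_mono card_mono) auto
  also have "\<dots> \<le> k * q ^ (C - 1)"
    using card_poly_hash_collisions[of k c x b y t0, OF x y t0] by (intro mult_right_mono) auto
  finally show ?thesis .
qed

section \<open>The hashed transmission scheme\<close>

text \<open>Since Calvin is causal, the data he writes is fixed before he sees any key.\<close>

locale hashed_code =
  fixes C :: nat and u :: "nat \<Rightarrow> nat" and q n k c K w :: nat and cw :: "nat \<Rightarrow> netword"
  assumes q_ge_2: "2 \<le> q"
    and u_pos: "\<And>i. i < C \<Longrightarrow> 0 < u i"
    and majority: "2 * w < C"
    and block_length: "Suc (k * c) + C * (total_cap C u * c + k) \<le> n"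
    and cw_valid: "\<And>m. m < K \<Longrightarrow> valid_word C u q (k * c) (cw m)"
    and cw_far: "\<And>m m'. m < K \<Longrightarrow> m' < K \<Longrightarrow> m \<noteq> m' \<Longrightarrow> w < link_distance C (k * c) (cw m) (cw m')"
begin

abbreviation data_len :: nat where "data_len \<equiv> k * c"

definition symbol_bound :: nat where "symbol_bound = q ^ total_cap C u"

definition hash_len :: nat where "hash_len = total_cap C u * c + k"

abbreviation hash :: "nat \<Rightarrow> (nat \<Rightarrow> nat) \<Rightarrow> nat" where
  "hash r v \<equiv> poly_hash symbol_bound c k r v"

definition transmitted :: "nat \<Rightarrow> (nat \<Rightarrow> nat) \<Rightarrow> netword" where
  "transmitted m r = (\<lambda>i t.
     if i < C \<and> t < n then
       if t < data_len then cw m i t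
       else if t = data_len then r i
       else if (t - Suc data_len) div hash_len < C
       then digit q ((t - Suc data_len) mod hash_len) (hash (r i) (cw m ((t - Suc data_len) div hash_len)))
       else 0
     else 0)"

definition encode :: "nat \<Rightarrow> netword pmf" where
  "encode m = map_pmf (transmitted m) (pmf_of_set (keys C q))"

definition supports :: "netword \<Rightarrow> nat \<Rightarrow> nat \<Rightarrow> bool" where
  "supports y j i \<longleftrightarrow>
     (\<forall>s<hash_len. y j (Suc data_len + i * hash_len + s) = digit q s (hash (y j data_len) (y i)))"

definition accepted :: "netword \<Rightarrow> nat set" where
  "accepted y = {i. i < C \<and> w < card {j. j < C \<and> supports y j i}}"

definition decode :: "netword \<Rightarrow> nat" where
  "decode y = (SOME m. m < K \<and> (\<forall>i\<in>accepted y. \<forall>t<data_len. cw m i t = y i t))"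

lemma data_len_less: "data_len < n"
  using block_length by simp

lemma pow_u_le_symbol_bound: "i < C \<Longrightarrow> q ^ u i \<le> symbol_bound"
  unfolding symbol_bound_def total_cap_def using q_ge_2
  by (intro power_increasing member_le_sum) auto

lemma q_le_pow_u: "i < C \<Longrightarrow> q \<le> q ^ u i"
  using q_ge_2 u_pos[of i] power_increasing[of 1 "u i" q] by simp

lemma cw_less: "m < K \<Longrightarrow> i < C \<Longrightarrow> t < data_len \<Longrightarrow> cw m i t < symbol_bound"
  using cw_valid pow_u_le_symbol_bound unfolding valid_word_def by (meson less_le_trans)

lemma hash_less:
  assumes "\<And>t. t < data_len \<Longrightarrow> v t < symbol_bound" "r < q"
  shows "hash r v < q ^ hash_len"
proof -
  have "hash r v < symbol_bound ^ c * q ^ k"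
    using assms q_ge_2 by (intro poly_hash_less) (auto simp: symbol_bound_def)
  also have "\<dots> = q ^ hash_len"
    by (simp add: symbol_bound_def hash_len_def power_mult power_add)
  finally show ?thesis .
qed

lemma transmitted_data: "i < C \<Longrightarrow> t < data_len \<Longrightarrow> transmitted m r i t = cw m i t"
  unfolding transmitted_def using data_len_less by simp

lemma transmitted_key: "i < C \<Longrightarrow> transmitted m r i data_len = r i"
  unfolding transmitted_def using data_len_less by simp

lemma transmitted_hash:
  assumes "i < C" "i' < C" "s < hash_len"
  shows "transmitted m r i (Suc data_len + i' * hash_len + s) = digit q s (hash (r i) (cw m i'))"
proof -
  have "i' * hash_len + s < C * hash_len"
    using index_less_mult[OF assms(2,3)] .
  moreover have "(i' * hash_len + s) div hash_len = i'" "(i' * hash_len + s) mod hash_len = s"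
    using assms(3) by auto
  ultimately show ?thesis
    using assms block_length unfolding transmitted_def hash_len_def[symmetric] by auto
qed

lemma transmitted_valid:
  assumes "m < K" "r \<in> keys C q"
  shows "valid_word C u q n (transmitted m r)"
  unfolding valid_word_def
proof (intro allI conjI impI)
  fix i t assume it: "i < C \<and> t < n"
  have "digit q s h < q ^ u i" for s h
    using digit_less[of q s h] q_ge_2 q_le_pow_u[of i] it by simp
  moreover have "cw m i t < q ^ u i" if "t < data_len"
    using cw_valid[OF assms(1)] it that unfolding valid_word_def by blast
  moreover have "r i < q ^ u i"
    using keys_less[OF assms(2)] q_le_pow_u it by (meson less_le_trans)
  ultimately show "transmitted m r i t < q ^ u i"
    using it q_ge_2 unfolding transmitted_def by auto
qed (auto simp: transmitted_def)

context
  fixes Zw :: "nat set" and m :: nat and r :: "nat \<Rightarrow> nat" and y :: netword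
  assumes Zw: "Zw \<subseteq> {0..<C}" "card Zw \<le> w"
    and m: "m < K"
    and r: "r \<in> keys C q"
    and honest: "\<And>i t. i < C \<Longrightarrow> i \<notin> Zw \<Longrightarrow> t < n \<Longrightarrow> y i t = transmitted m r i t"
    and y_less: "\<And>i t. i < C \<Longrightarrow> t < data_len \<Longrightarrow> y i t < symbol_bound"
    and no_collision: "\<And>i j. i \<in> Zw \<Longrightarrow> j < C \<Longrightarrow> j \<notin> Zw \<Longrightarrow> \<exists>t<data_len. y i t \<noteq> cw m i t \<Longrightarrow>
                          hash (r j) (y i) \<noteq> hash (r j) (cw m i)"
begin

lemma finite_jammed: "finite Zw"
  using Zw(1) finite_subset by blast

lemma honest_supports_iff:
  assumes "j < C" "j \<notin> Zw" "i < C"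
  shows "supports y j i \<longleftrightarrow> hash (r j) (y i) = hash (r j) (cw m i)"
proof -
  have "y j (Suc data_len + i * hash_len + s) = digit q s (hash (r j) (cw m i))" if "s < hash_len" for s
    using honest[OF assms(1,2)] transmitted_hash[OF assms(1,3) that] index_less_mult[OF assms(3) that]
      block_length unfolding hash_len_def by (simp add: add.assoc)
  moreover have "y j data_len = r j"
    using honest[OF assms(1,2) data_len_less] transmitted_key[OF assms(1)] by simp
  moreover have "hash (r j) v < q ^ hash_len" if "\<And>t. t < data_len \<Longrightarrow> v t < symbol_bound" for v
    using hash_less[OF that keys_less[OF r assms(1)]] .
  ultimately show ?thesis
    unfolding supports_def using y_less cw_less[OF m] assms(3)
    by (metis digits_inj)
qed

lemma honest_accepted: "{0..<C} - Zw \<subseteq> accepted y"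
proof
  fix i assume i: "i \<in> {0..<C} - Zw"
  have "y i t = cw m i t" if "t < data_len" for t
    using i honest[of i t] transmitted_data[of i t] that data_len_less by simp
  then have "{0..<C} - Zw \<subseteq> {j. j < C \<and> supports y j i}"
    using i honest_supports_iff by (auto cong: poly_hash_cong)
  then have "card ({0..<C} - Zw) \<le> card {j. j < C \<and> supports y j i}"
    by (intro card_mono) auto
  moreover have "w < card ({0..<C} - Zw)"
    using Zw majority by (simp add: card_Diff_subset finite_subset)
  ultimately show "i \<in> accepted y"
    using i unfolding accepted_def by auto
qed

text \<open>An accepted link is supported by more than \<open>w\<close> links, hence by an honest one, whose hash
  check detects any corruption of its data.\<close>

lemma accepted_correct:
  assumes "i \<in> accepted y" "t < data_len"
  shows "y i t = cw m i t"
proof (rule ccontr)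
  assume wrong: "y i t \<noteq> cw m i t"
  have i: "i < C" and supporters: "w < card {j. j < C \<and> supports y j i}"
    using assms(1) unfolding accepted_def by auto
  have "i \<in> Zw"
  proof (rule ccontr)
    assume "i \<notin> Zw"
    then have "y i t = cw m i t"
      using honest[OF i] transmitted_data[OF i assms(2)] assms(2) data_len_less by simp
    then show False using wrong by simp
  qed
  have "\<not> {j. j < C \<and> supports y j i} \<subseteq> Zw"
  proof
    assume "{j. j < C \<and> supports y j i} \<subseteq> Zw"
    then have "card {j. j < C \<and> supports y j i} \<le> card Zw"
      by (rule card_mono[OF finite_jammed])
    then show False using supporters Zw(2) by simp
  qed
  then obtain j where "j < C" "j \<notin> Zw" "supports y j i" by blast
  then show False
    using honest_supports_iff no_collision \<open>i \<in> Zw\<close> i wrong assms(2) by blast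
qed

lemma decode_correct: "decode y = m"
  unfolding decode_def
proof (rule some_equality)
  show "m < K \<and> (\<forall>i\<in>accepted y. \<forall>t<data_len. cw m i t = y i t)"
    using m accepted_correct by simp
next
  fix m' assume m': "m' < K \<and> (\<forall>i\<in>accepted y. \<forall>t<data_len. cw m' i t = y i t)"
  have "{i. i < C \<and> (\<exists>t<data_len. cw m' i t \<noteq> cw m i t)} \<subseteq> Zw"
  proof (intro subsetI CollectI)
    fix i assume "i \<in> {i. i < C \<and> (\<exists>t<data_len. cw m' i t \<noteq> cw m i t)}"
    then show "i \<in> Zw"
      using m' accepted_correct honest_accepted by auto
  qed
  then have "link_distance C data_len (cw m') (cw m) \<le> w"
    unfolding link_distance_def using card_mono[OF finite_jammed] Zw(2) by (meson le_trans)
  then show "m' = m"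
    using cw_far[of m' m] m m' by (auto simp: not_less[symmetric])
qed

end

context
  fixes zrw zro zwo :: nat and Zrw Zro Zwo :: "nat set" and J :: "nat \<Rightarrow> nat \<Rightarrow> netword \<Rightarrow> nat"
  assumes adv: "admissible_adv C u q n (zrw, zro, zwo) Zrw Zro Zwo J"
    and jam_budget: "zrw + zwo \<le> w"
begin

abbreviation jam :: "netword \<Rightarrow> netword" where
  "jam \<equiv> received_ow C n (Zrw \<union> Zwo) J"

lemma jammed_links: "Zrw \<union> Zwo \<subseteq> {0..<C}" "card (Zrw \<union> Zwo) \<le> w"
proof -
  show "Zrw \<union> Zwo \<subseteq> {0..<C}" using adv unfolding admissible_adv_def by auto
  have "card (Zrw \<union> Zwo) \<le> card Zrw + card Zwo" by (rule card_Un_le)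
  then show "card (Zrw \<union> Zwo) \<le> w" using adv jam_budget unfolding admissible_adv_def by auto
qed

lemma jam_data_less:
  assumes "m < K" "i < C" "t < data_len"
  shows "jam (transmitted m r) i t < symbol_bound"
proof (cases "i \<in> Zrw \<union> Zwo")
  case True
  then have "jam (transmitted m r) i t = J i t (transmitted m r)"
    using assms data_len_less unfolding received_ow_def by simp
  also have "\<dots> < q ^ u i"
    using adv unfolding admissible_adv_def by blast
  finally show ?thesis
    using pow_u_le_symbol_bound[OF assms(2)] by simp
next
  case False
  then show ?thesis
    using assms data_len_less cw_less transmitted_data unfolding received_ow_def by simp
qed

lemma jam_data_key_independent:
  assumes "t < data_len"
  shows "jam (transmitted m r) i t = jam (transmitted m r') i t"
proof -
  have "transmitted m r j s = transmitted m r' j s" if "s \<le> t" for j s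
    using that assms unfolding transmitted_def by simp
  then have "J i t (transmitted m r) = J i t (transmitted m r')"
    using adv unfolding admissible_adv_def by blast
  then show ?thesis
    using assms unfolding received_ow_def transmitted_def by simp
qed

lemma decode_error_collision:
  assumes m: "m < K" and r: "r \<in> keys C q" and err: "decode (jam (transmitted m r)) \<noteq> m"
  defines "F \<equiv> jam (transmitted m (\<lambda>_. 0))"
  obtains i j where "i \<in> Zrw \<union> Zwo" "j < C" "j \<notin> Zrw \<union> Zwo" "\<exists>t<data_len. F i t \<noteq> cw m i t"
    "hash (r j) (F i) = hash (r j) (cw m i)"
proof (rule ccontr)
  assume no_pair: "\<not> thesis"
  note collision_pair = that
  have F_eq: "jam (transmitted m r) i t = F i t" if "t < data_len" for i t
    unfolding F_def using jam_data_key_independent[OF that] by simp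
  have "decode (jam (transmitted m r)) = m"
  proof (rule decode_correct[OF jammed_links m r])
    show "jam (transmitted m r) i t = transmitted m r i t" if "i < C" "i \<notin> Zrw \<union> Zwo" "t < n" for i t
      using that unfolding received_ow_def by simp
    show "jam (transmitted m r) i t < symbol_bound" if "i < C" "t < data_len" for i t
      using jam_data_less[OF m that] .
    show "hash (r j) (jam (transmitted m r) i) \<noteq> hash (r j) (cw m i)"
      if ij: "i \<in> Zrw \<union> Zwo" "j < C" "j \<notin> Zrw \<union> Zwo"
        and wrong: "\<exists>t<data_len. jam (transmitted m r) i t \<noteq> cw m i t" for i j
    proof
      assume collision: "hash (r j) (jam (transmitted m r) i) = hash (r j) (cw m i)"
      have "hash (r j) (jam (transmitted m r) i) = hash (r j) (F i)"
        using F_eq by (intro poly_hash_cong) simp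
      moreover have "\<exists>t<data_len. F i t \<noteq> cw m i t"
        using wrong F_eq by auto
      ultimately show False
        using collision_pair[OF ij] collision no_pair by simp
    qed
  qed
  then show False using err by simp
qed

lemma card_decode_error_keys:
  assumes m: "m < K"
  shows "card {r \<in> keys C q. decode (jam (transmitted m r)) \<noteq> m} \<le> C * C * (k * q ^ (C - 1))"
proof -
  define F where "F = jam (transmitted m (\<lambda>_. 0))"
  define I where "I = {(i, j). i \<in> Zrw \<union> Zwo \<and> j < C \<and> j \<notin> Zrw \<union> Zwo \<and> (\<exists>t<data_len. F i t \<noteq> cw m i t)}"
  define Bad where "Bad = (\<lambda>(i, j). {r \<in> keys C q. r j \<in> {\<rho>. hash \<rho> (F i) = hash \<rho> (cw m i)}})"
  have I_sub: "I \<subseteq> {..<C} \<times> {..<C}"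
    using jammed_links(1) unfolding I_def by auto
  have "{r \<in> keys C q. decode (jam (transmitted m r)) \<noteq> m} \<subseteq> (\<Union>p\<in>I. Bad p)"
  proof
    fix r assume "r \<in> {r \<in> keys C q. decode (jam (transmitted m r)) \<noteq> m}"
    then obtain i j where "i \<in> Zrw \<union> Zwo" "j < C" "j \<notin> Zrw \<union> Zwo" "\<exists>t<data_len. F i t \<noteq> cw m i t"
        "hash (r j) (F i) = hash (r j) (cw m i)" "r \<in> keys C q"
      using decode_error_collision[OF m, of r] unfolding F_def by blast
    then show "r \<in> (\<Union>p\<in>I. Bad p)"
      unfolding I_def Bad_def by blast
  qed
  then have "card {r \<in> keys C q. decode (jam (transmitted m r)) \<noteq> m} \<le> card (\<Union>p\<in>I. Bad p)"
    by (intro card_mono finite_UN_I finite_subset[OF I_sub]) (auto simp: Bad_def finite_keys)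
  also have "\<dots> \<le> (\<Sum>p\<in>I. card (Bad p))"
    by (intro card_UN_le finite_subset[OF I_sub]) simp
  also have "\<dots> \<le> (\<Sum>p\<in>I. k * q ^ (C - 1))"
  proof (intro sum_mono)
    fix p assume "p \<in> I"
    then obtain i j where p: "p = (i, j)" and i: "i < C" and j: "j < C"
      and differ: "\<exists>t<data_len. F i t \<noteq> cw m i t"
      using I_sub by (cases p) (auto simp: I_def)
    have "card (Bad p) = card {r \<in> keys C q. hash (r j) (F i) = hash (r j) (cw m i)}"
      unfolding p Bad_def by simp
    also have "\<dots> \<le> k * q ^ (C - 1)"
      using j differ jam_data_less[OF m i] cw_less[OF m i] unfolding F_def
      by (intro card_keys_hash_collision) auto
    finally show "card (Bad p) \<le> k * q ^ (C - 1)" .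
  qed
  also have "\<dots> = card I * (k * q ^ (C - 1))"
    by simp
  also have "\<dots> \<le> C * C * (k * q ^ (C - 1))"
    using card_mono[OF _ I_sub] by (intro mult_right_mono) (auto simp: card_cartesian_product)
  finally show ?thesis .
qed

lemma prob_decode_error_le:
  assumes "m < K"
  shows "measure_pmf.prob (encode m) {x. decode (jam x) \<noteq> m} \<le> real (C * C * k) / real q"
proof -
  have "measure_pmf.prob (pmf_of_set (keys C q)) {r. decode (jam (transmitted m r)) \<noteq> m} =
               real (card (keys C q \<inter> {r. decode (jam (transmitted m r)) \<noteq> m})) / real (card (keys C q))"
    using zero_key[of q C] q_ge_2 by (intro measure_pmf_of_set finite_keys) auto
  then have "measure_pmf.prob (encode m) {x. decode (jam x) \<noteq> m} =
               real (card {r \<in> keys C q. decode (jam (transmitted m r)) \<noteq> m}) / real q ^ C"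
    unfolding encode_def card_keys by (simp add: Int_def)
  also have "\<dots> \<le> real (C * C * (k * q ^ (C - 1))) / real q ^ C"
    using card_decode_error_keys[OF assms] by (intro divide_right_mono of_nat_mono) auto
  also have "\<dots> = real (C * C * k) * real q ^ (C - 1) / (real q * real q ^ (C - 1))"
    using majority by (cases C) (simp_all only: of_nat_mult of_nat_power mult.assoc power_Suc diff_Suc_1)
  also have "\<dots> = real (C * C * k) / real q"
    using q_ge_2 by (intro mult_divide_mult_cancel_right) simp
  finally show ?thesis .
qed

end

lemma set_pmf_encode: "set_pmf (encode m) = transmitted m ` keys C q"
proof -
  have "keys C q \<noteq> {}" using zero_key[of q C] q_ge_2 by auto
  then show ?thesis unfolding encode_def by (simp add: finite_keys)
qed

lemma good_code:
  assumes K: "K = num_msgs q n R" and w: "w = zrw + zwo" and small: "real (C * C * k) / real q < \<epsilon>"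
  shows "good_code_ow C u (zrw, zro, zwo) q n R \<epsilon>"
  unfolding good_code_ow_def K[symmetric]
proof (intro exI conjI allI impI)
  show "set_pmf (encode m) \<subseteq> {x. valid_word C u q n x}" if "m < K" for m
    unfolding set_pmf_encode using transmitted_valid[OF that] by blast
next
  fix Zrw Zro Zwo J
  assume adv: "admissible_adv C u q n (zrw, zro, zwo) Zrw Zro Zwo J"
  have K_pos: "0 < K"
    unfolding K using q_ge_2 by (intro num_msgs_pos) simp
  have "(\<Sum>m<K. measure_pmf.prob (encode m) {x. decode (received_ow C n (Zrw \<union> Zwo) J x) \<noteq> m})
          \<le> (\<Sum>m<K. real (C * C * k) / real q)"
    using prob_decode_error_le[OF adv] w by (intro sum_mono) simp
  then have "err_prob K encode decode (received_ow C n (Zrw \<union> Zwo) J) \<le> real (C * C * k) / real q"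
    unfolding err_prob_def using K_pos by (simp add: divide_le_eq mult.commute)
  then show "err_prob K encode decode (received_ow C n (Zrw \<union> Zwo) J) < \<epsilon>"
    using small by linarith
qed

end

section \<open>Capacity\<close>

lemma good_code_ow_if_long:
  assumes u_pos: "\<forall>i<C. 0 < u i" and q: "2 \<le> q" and majority: "2 * (zrw + zwo) < C"
    and len: "Suc (k * c) + C * (total_cap C u * c + k) \<le> n"
    and big: "num_msgs q n R * (2 ^ C * q ^ (k * c * U_max C u (zrw + zwo))) < q ^ (k * c * total_cap C u)"
    and small: "real (C * C * k) / real q < \<epsilon>"
  shows "good_code_ow C u (zrw, zro, zwo) q n R \<epsilon>"
proof -
  obtain cw where "\<forall>m<num_msgs q n R. valid_word C u q (k * c) (cw m)"
    "\<forall>m m'. m < num_msgs q n R \<longrightarrow> m' < num_msgs q n R \<longrightarrow> m \<noteq> m' \<longrightarrow>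
       zrw + zwo < link_distance C (k * c) (cw m) (cw m')"
    using exists_far_codewords[of q "zrw + zwo" C "num_msgs q n R" "k * c" u] q majority big by auto
  then interpret hashed_code C u q n k c "num_msgs q n R" "zrw + zwo" cw
    using u_pos q majority len by unfold_locales auto
  show ?thesis
    using small by (intro good_code) auto
qed

lemma num_msgs_times_ball_less:
  fixes q n C D Um T :: nat and R :: real
  assumes q: "2 \<le> q" and R: "0 \<le> R" and Um_T: "Um \<le> T"
    and rate: "real n * R + real C + 1 < real D * real (T - Um)"
  shows "num_msgs q n R * (2 ^ C * q ^ (D * Um)) < q ^ (D * T)"
proof -
  define x where "x = real q powr (real n * R)"
  have "0 \<le> x" unfolding x_def by simp
  have "real (num_msgs q n R) * 2 ^ C \<le> (2 * x) * real q ^ C"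
    using num_msgs_le_twice[of q R n] q R power_mono[of 2 "real q" C] \<open>0 \<le> x\<close> unfolding x_def
    by (intro mult_mono) auto
  also have "\<dots> \<le> real q * x * real q ^ C"
    using q \<open>0 \<le> x\<close> by (intro mult_right_mono) auto
  also have "\<dots> = real q powr (real n * R + real C + 1)"
    unfolding x_def using q by (simp add: powr_add powr_realpow algebra_simps)
  also have "\<dots> < real q powr (real (D * (T - Um)))"
    using rate q by (intro powr_less_mono) auto
  also have "\<dots> = real q ^ (D * (T - Um))"
    by (rule powr_realpow) (use q in simp)
  finally have "real (num_msgs q n R) * 2 ^ C * real q ^ (D * Um) < real q ^ (D * (T - Um)) * real q ^ (D * Um)"
    using q by (intro mult_strict_right_mono) auto
  also have "\<dots> = real q ^ (D * T)"
    using Um_T by (simp add: power_add[symmetric] diff_mult_distrib2)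
  finally have "real (num_msgs q n R * (2 ^ C * q ^ (D * Um))) < real (q ^ (D * T))"
    by (simp add: mult.assoc)
  then show ?thesis
    by (simp only: of_nat_less_iff)
qed

lemma good_code_ow_long_blocks:
  fixes C zrw zwo k L n :: nat and u :: "nat \<Rightarrow> nat" and R \<epsilon> :: real
  defines "V \<equiv> total_cap C u - U_max C u (zrw + zwo)"
  assumes u_pos: "\<forall>i<C. 0 < u i" and q: "2 \<le> q" and majority: "2 * (zrw + zwo) < C"
    and R: "0 \<le> R" and small: "real (C * C * k) / real q < \<epsilon>"
    and L: "L = k + C * total_cap C u + 1" and n_ge: "L * (C * k + 1) \<le> n"
    and n_rate: "real k * real V + real C + 2 < real n * (real k * real V / real L - R)"
  shows "good_code_ow C u (zrw, zro, zwo) q n R \<epsilon>"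
proof -
  define c where "c = n div L"
  have L_pos: "0 < L" using L by simp
  have "C * k + 1 \<le> c"
    using div_le_mono[OF n_ge, of L] L_pos unfolding c_def by simp
  then have "Suc (k * c) + C * (total_cap C u * c + k) \<le> L * c"
    unfolding L by (simp add: algebra_simps)
  also have "\<dots> \<le> n"
    unfolding c_def by (simp add: mult.commute)
  finally have len: "Suc (k * c) + C * (total_cap C u * c + k) \<le> n" .
  have "n < (c + 1) * L"
    using div_less_iff_less_mult[OF L_pos, of n "c + 1"] unfolding c_def by simp
  then have "real n < (real c + 1) * real L"
    by (metis of_nat_less_iff of_nat_mult of_nat_Suc Suc_eq_plus1 add.commute)
  then have "real n / real L < real c + 1"
    using L_pos by (simp add: divide_less_eq)
  then have "real k * real V * (real n / real L - 1) \<le> real k * real V * real c"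
    by (intro mult_left_mono) auto
  moreover have "real k * real V * (real n / real L - 1) = real n * (real k * real V / real L - R) + real n * R - real k * real V"
    using L_pos by (simp add: field_simps)
  ultimately have "real n * R + real C + 1 < real k * real V * real c"
    using n_rate by linarith
  then have "real n * R + real C + 1 < real (k * c) * real (total_cap C u - U_max C u (zrw + zwo))"
    unfolding V_def by (simp add: mult_ac)
  then have "num_msgs q n R * (2 ^ C * q ^ (k * c * U_max C u (zrw + zwo))) < q ^ (k * c * total_cap C u)"
    using q R majority U_max_le_total_cap[of "zrw + zwo" C u] by (intro num_msgs_times_ball_less) auto
  then show ?thesis
    using good_code_ow_if_long[OF u_pos q majority len _ small] by blast
qed

text \<open>Codewords of \<open>k * c\<close> symbols sent in blocks of \<open>L * c\<close> slots have rate about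
  \<open>k * V / L\<close>; choosing \<open>k\<close> large makes the overhead \<open>L - k\<close> negligible.\<close>

lemma achievable_below_capacity:
  assumes u_pos: "\<forall>i<C. 0 < u i" and majority: "2 * (zrw + zwo) < C"
    and R: "0 \<le> R" and R_less: "R < real (total_cap C u) - real (U_max C u (zrw + zwo))"
  shows "achievable_ow C u (zrw, zro, zwo) R"
proof -
  define V where "V = total_cap C u - U_max C u (zrw + zwo)"
  have R_V: "R < real V"
    using R_less U_max_le_total_cap[of "zrw + zwo" C u] majority by (simp add: V_def of_nat_diff)
  define L0 where "L0 = C * total_cap C u + 1"
  define k where "k = nat \<lceil>R * real L0 / (real V - R)\<rceil> + 1"
  define L where "L = k + C * total_cap C u + 1"
  have "R * real L0 / (real V - R) < real k"
    unfolding k_def by linarith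
  then have "R * real L < real k * real V"
    using R_V unfolding L_def L0_def by (simp add: field_simps)
  moreover have "0 < L"
    unfolding L_def by simp
  ultimately have rate: "0 < real k * real V / real L - R"
    by (simp add: less_divide_eq)
  show ?thesis
    unfolding achievable_ow_def
  proof (intro conjI R allI impI)
    fix \<epsilon> :: real assume "0 < \<epsilon>"
    define Q where "Q = max 2 (nat \<lceil>real (C * C * k) / \<epsilon>\<rceil> + 1)"
    define N where "N = max (L * (C * k + 1))
                           (nat \<lceil>(real k * real V + real C + 2) / (real k * real V / real L - R)\<rceil> + 1)"
    have "good_code_ow C u (zrw, zro, zwo) q n R \<epsilon>" if q: "Q \<le> q" and n: "N \<le> n" for q n
    proof (rule good_code_ow_long_blocks[OF u_pos _ majority R _ L_def])
      show "2 \<le> q" using q unfolding Q_def by simp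
      have "real (C * C * k) / \<epsilon> < real q"
        using q unfolding Q_def by linarith
      then show "real (C * C * k) / real q < \<epsilon>"
        using \<open>0 < \<epsilon>\<close> \<open>2 \<le> q\<close> by (simp add: field_simps)
      show "L * (C * k + 1) \<le> n"
        using n unfolding N_def by simp
      have "(real k * real V + real C + 2) / (real k * real V / real L - R) < real n"
        using n unfolding N_def by linarith
      then show "real k * real (total_cap C u - U_max C u (zrw + zwo)) + real C + 2
                   < real n * (real k * real (total_cap C u - U_max C u (zrw + zwo)) / real L - R)"
        using rate unfolding V_def by (simp add: field_simps)
    qed
    then show "\<exists>Q. \<forall>q\<ge>Q. \<exists>N. \<forall>n\<ge>N. good_code_ow C u (zrw, zro, zwo) q n R \<epsilon>"
      by blast
  qed
qed

lemma achievable_zero: "achievable_ow C u z 0"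
  unfolding achievable_ow_def
proof (intro conjI order_refl allI impI exI)
  fix \<epsilon> :: real and q n :: nat
  assume "0 < \<epsilon>" "1 \<le> q"
  then have "num_msgs q n 0 = 1" unfolding num_msgs_def by simp
  then show "good_code_ow C u z q n 0 \<epsilon>"
    unfolding good_code_ow_def err_prob_def valid_word_def
    using \<open>0 < \<epsilon>\<close> \<open>1 \<le> q\<close> by (intro exI[of _ "\<lambda>_. return_pmf (\<lambda>_ _. 0)"] exI[of _ "\<lambda>_. 0"]) auto
qed

lemma Sup_eq_if_contains_interval:
  fixes S :: "real set"
  assumes "0 \<in> S" "\<And>x. x \<in> S \<Longrightarrow> x \<le> V" "\<And>x. 0 \<le> x \<Longrightarrow> x < V \<Longrightarrow> x \<in> S"
  shows "Sup S = V"
proof (rule cSup_eq_non_empty)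
  fix y assume ub: "\<And>x. x \<in> S \<Longrightarrow> x \<le> y"
  show "V \<le> y"
  proof (rule ccontr)
    assume "\<not> V \<le> y"
    moreover have "0 \<le> y" using ub assms(1) by blast
    ultimately have "(y + V) / 2 \<in> S" using assms(3) by simp
    then show False using ub \<open>\<not> V \<le> y\<close> by fastforce
  qed
qed (use assms in auto)

theorem theorem4:
  fixes C :: nat and u :: "nat \<Rightarrow> nat" and zrw zro zwo :: nat
  assumes "\<forall>i < C. u i > 0"
    and "zrw + zro + zwo \<le> C"
  shows "capacity_ow C u (zrw, zro, zwo) =
           (if 2 * zwo + 2 * zrw < C
            then real (total_cap C u) - real (U_max C u (zrw + zwo))
            else 0)"
proof (cases "2 * zwo + 2 * zrw < C")
  case True
  have "Sup {R. achievable_ow C u (zrw, zro, zwo) R} = real (total_cap C u) - real (U_max C u (zrw + zwo))"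
    using True assms achievable_zero achievable_le_erasure_bound achievable_below_capacity
    by (intro Sup_eq_if_contains_interval) auto
  then show ?thesis
    using True unfolding capacity_ow_def by simp
next
  case False
  then have half: "C \<le> 2 * (zrw + zwo)" by simp
  have "{R. achievable_ow C u (zrw, zro, zwo) R} = {0}"
  proof (intro equalityI subsetI)
    fix R assume "R \<in> {R. achievable_ow C u (zrw, zro, zwo) R}"
    then have "R \<le> 0" "0 \<le> R"
      using achievable_le_zero_if_half_jammable[OF _ half] unfolding achievable_ow_def by auto
    then show "R \<in> {0}" by simp
  qed (simp add: achievable_zero)
  then show ?thesis
    using False unfolding capacity_ow_def by simp
qed

end
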